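(* Assume $K_1\subseteq K_2\subseteq\cdots\subseteq K_n\subseteq\mathbb F_q$ are subfields. Let $\psi\in\mathrm{Aff}(\mathbb F_q^n)$ be given by $\boldsymbol\alpha\mapsto A\boldsymbol\alpha+\boldsymbol\beta$ with $A=(a_{ij})\in GL(n,\mathbb F_q)$ and $\boldsymbol\beta=(b_1,\dots,b_n)^T\in\mathbb F_q^n$. Then $\psi(\mathcal X)=\mathcal X$ (i.e.\ $\psi|_{\mathcal X}\in\mathrm{Aff}(\mathcal X)$) if and only if: (i) for all $i,j\in\{1,\dots,n\}$, $a_{ij}\in K_i$, $b_j\in K_j$, and $a_{ij}=0$ whenever $K_i\subsetneq K_j$; and (ii) for every maximal interval of indices $i\le j$ with $K_i=K_{i+1}=\cdots=K_j$ (i.e.\ $K_{i-1}\subsetneq K_i$ or $i=1$, and $K_j\subsetneq K_{j+1}$ or $j=n$), the square submatrix $(a_{uw})_{i\le u,w\le j}$ is invertible.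
   Context: $\mathcal X=K_1\times\cdots\times K_n\subseteq\mathbb F_q^n$. $\mathrm{Aff}(\mathbb F_q^n)$ is the group of maps $\boldsymbol\alpha\mapsto A\boldsymbol\alpha+\boldsymbol\beta$ with $A\in GL(n,\mathbb F_q)$, $\boldsymbol\beta\in\mathbb F_q^n$. $\mathrm{Aff}(\mathcal X)$ is the set of maps $\varphi:\mathcal X\to\mathcal X$ of the form $\varphi=\psi|_{\mathcal X}$ with $\psi\in\mathrm{Aff}(\mathbb F_q^n)$ and $\psi(\mathcal X)=\mathcal X$. *)

theory Defs
  imports Main
begin

definition subfield :: "'a::field set \<Rightarrow> bool" where
  "subfield K \<longleftrightarrow> 0 \<in> K \<and> 1 \<in> K \<and>
     (\<forall>x\<in>K. \<forall>y\<in>K. x + y \<in> K \<and> x * y \<in> K) \<and>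
     (\<forall>x\<in>K. - x \<in> K) \<and> (\<forall>x\<in>K. x \<noteq> 0 \<longrightarrow> inverse x \<in> K)"

text \<open>Vectors of F^n are functions nat => 'a indexed by {1..n}, zero outside.
  Matrices are functions nat => nat => 'a; only entries with indices in the
  relevant index set matter.\<close>
definition vecs :: "nat \<Rightarrow> (nat \<Rightarrow> 'a::zero) set" where
  "vecs n = {v. \<forall>i. i \<notin> {1..n} \<longrightarrow> v i = 0}"

definition prodset :: "nat \<Rightarrow> (nat \<Rightarrow> 'a::zero set) \<Rightarrow> (nat \<Rightarrow> 'a) set" where
  "prodset n K = {v \<in> vecs n. \<forall>i\<in>{1..n}. v i \<in> K i}"

definition affmap :: "nat \<Rightarrow> (nat \<Rightarrow> nat \<Rightarrow> 'a::comm_ring_1) \<Rightarrow> (nat \<Rightarrow> 'a) \<Rightarrow> (nat \<Rightarrow> 'a) \<Rightarrow> (nat \<Rightarrow> 'a)" where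
  "affmap n A b v = (\<lambda>i. if i \<in> {1..n} then (\<Sum>j=1..n. A i j * v j) + b i else 0)"

definition invertible_on :: "nat set \<Rightarrow> (nat \<Rightarrow> nat \<Rightarrow> 'a::comm_ring_1) \<Rightarrow> bool" where
  "invertible_on I A \<longleftrightarrow> (\<exists>B. \<forall>i\<in>I. \<forall>k\<in>I.
     (\<Sum>j\<in>I. A i j * B j k) = (if i = k then 1 else 0) \<and>
     (\<Sum>j\<in>I. B i j * A j k) = (if i = k then 1 else 0))"

end

theory Submission
  imports Defs
begin

text \<open>
  Evaluating \<open>\<psi>\<close> at \<open>0\<close> and at the scaled unit vectors \<open>c e\<^sub>j\<close> with \<open>c \<in> K\<^sub>j\<close> shows
  that \<open>\<psi>(\<X>) \<subseteq> \<X>\<close> forces \<open>b\<^sub>i \<in> K\<^sub>i\<close> and \<open>a\<^sub>i\<^sub>j K\<^sub>j \<subseteq> K\<^sub>i\<close>, i.e. condition (i); conversely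
  (i) gives \<open>\<psi>(\<X>) \<subseteq> \<X>\<close> because the \<open>K\<^sub>i\<close> form a chain, and equality follows as \<open>\<psi>\<close> is
  injective and \<open>\<X>\<close> is finite.

  Condition (ii) is then automatic. By (i), \<open>A\<close> is block lower triangular with respect to the
  maximal runs of equal fields, so the coordinate subspace of the indices after a run is
  \<open>A\<close>-invariant; being finite, it is mapped bijectively onto itself. Hence the diagonal block of
  the run is injective modulo that subspace, and an injective square matrix over a finite ring
  is invertible by the pigeonhole principle.
\<close>
definition matvec :: "nat set \<Rightarrow> (nat \<Rightarrow> nat \<Rightarrow> 'a::comm_ring_1) \<Rightarrow> (nat \<Rightarrow> 'a) \<Rightarrow> nat \<Rightarrow> 'a" where
  "matvec I M v = (\<lambda>i. if i \<in> I then (\<Sum>j\<in>I. M i j * v j) else 0)"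

definition supported_on :: "nat set \<Rightarrow> (nat \<Rightarrow> 'a::zero) set" where
  "supported_on I = {v. \<forall>i. i \<notin> I \<longrightarrow> v i = 0}"

definition unit_vec :: "nat \<Rightarrow> nat \<Rightarrow> 'a::zero_neq_one" where
  "unit_vec k = (\<lambda>i. if i = k then 1 else 0)"

lemma finite_supported_on:
  assumes "finite I"
  shows "finite (supported_on I :: (nat \<Rightarrow> 'a::{zero,finite}) set)"
  using finite_set_of_finite_funs[OF assms finite_UNIV, of 0]
  by (simp add: supported_on_def)

lemma supported_on_mono: "I \<subseteq> J \<Longrightarrow> supported_on I \<subseteq> supported_on J"
  by (auto simp: supported_on_def)

lemma vecs_eq_supported_on: "vecs n = supported_on {1..n}"
  by (simp add: vecs_def supported_on_def)

lemma unit_vec_supported_on: "k \<in> I \<Longrightarrow> unit_vec k \<in> supported_on I"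
  by (simp add: unit_vec_def supported_on_def)

lemma matvec_supported_on: "matvec I M v \<in> supported_on I"
  by (simp add: matvec_def supported_on_def)

lemma matvec_diff: "matvec I M (\<lambda>i. v i - w i) = (\<lambda>i. matvec I M v i - matvec I M w i)"
  by (auto simp: matvec_def fun_eq_iff sum_subtractf algebra_simps)

lemma matvec_unit_vec:
  assumes "finite I" "k \<in> I" "j \<in> I"
  shows "matvec I M (unit_vec k) j = M j k"
  using assms by (simp add: matvec_def unit_vec_def if_distrib cong: if_cong)

lemma matvec_left_inverse:
  assumes "finite I"
    and inv: "\<forall>i\<in>I. \<forall>k\<in>I. (\<Sum>j\<in>I. B i j * M j k) = (if i = k then 1 else 0)"
    and v: "v \<in> supported_on I"
  shows "matvec I B (matvec I M v) = v"
proof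
  fix i
  show "matvec I B (matvec I M v) i = v i"
  proof (cases "i \<in> I")
    case False
    then show ?thesis using v by (simp add: matvec_def supported_on_def)
  next
    case True
    have "matvec I B (matvec I M v) i = (\<Sum>j\<in>I. \<Sum>l\<in>I. B i j * M j l * v l)"
      using True by (simp add: matvec_def sum_distrib_left mult.assoc)
    also have "\<dots> = (\<Sum>l\<in>I. (\<Sum>j\<in>I. B i j * M j l) * v l)"
      by (subst sum.swap) (simp add: sum_distrib_right)
    also have "\<dots> = (\<Sum>l\<in>I. if l = i then v l else 0)"
      using inv True by (intro sum.cong) auto
    also have "\<dots> = v i"
      using True \<open>finite I\<close> by simp
    finally show ?thesis .
  qed
qed

lemma inj_on_matvec_if_invertible_on:
  assumes "finite I" "invertible_on I M"
  shows "inj_on (matvec I M) (supported_on I)"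
proof -
  obtain B where "\<forall>i\<in>I. \<forall>k\<in>I. (\<Sum>j\<in>I. B i j * M j k) = (if i = k then 1 else 0)"
    using assms(2) unfolding invertible_on_def by blast
  then show ?thesis
    by (intro inj_on_inverseI[where g = "matvec I B"] matvec_left_inverse[OF assms(1)])
qed

lemma matvec_image_supported_on_eq:
  fixes M :: "nat \<Rightarrow> nat \<Rightarrow> 'a::{comm_ring_1,finite}"
  assumes "finite I" and inj: "inj_on (matvec I M) (supported_on I)" and "S \<subseteq> I"
    and invariant: "\<forall>i\<in>I. \<forall>j\<in>S. i \<notin> S \<longrightarrow> M i j = 0"
  shows "matvec I M ` supported_on S = supported_on S"
proof (rule endo_inj_surj)
  show "finite (supported_on S :: (nat \<Rightarrow> 'a) set)"
    using assms by (intro finite_supported_on) (rule finite_subset)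
  show "inj_on (matvec I M) (supported_on S)"
    using inj supported_on_mono[OF \<open>S \<subseteq> I\<close>] by (rule inj_on_subset)
  show "matvec I M ` supported_on S \<subseteq> supported_on S"
  proof (clarsimp simp: supported_on_def)
    fix v :: "nat \<Rightarrow> 'a" and i
    assume v: "\<forall>i. i \<notin> S \<longrightarrow> v i = 0" and "i \<notin> S"
    then have "M i j * v j = 0" if "i \<in> I" "j \<in> I" for j
      using invariant that by (cases "j \<in> S") auto
    then show "matvec I M v i = 0"
      by (simp add: matvec_def)
  qed
qed

lemma matvec_right_inverse_if_surj:
  assumes "matvec I M ` supported_on I = supported_on I"
  obtains B where "\<forall>i\<in>I. \<forall>k\<in>I. (\<Sum>j\<in>I. M i j * B j k) = (if i = k then 1 else 0)"
proof -
  have "\<forall>k\<in>I. \<exists>v. matvec I M v = unit_vec k"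
    using assms unit_vec_supported_on by (metis imageE)
  then obtain V where V: "\<forall>k\<in>I. matvec I M (V k) = unit_vec k"
    by metis
  have "(\<Sum>j\<in>I. M i j * V k j) = (if i = k then 1 else 0)" if "i \<in> I" "k \<in> I" for i k
  proof -
    have "matvec I M (V k) i = unit_vec k i"
      using V that by simp
    then show ?thesis
      using that by (simp add: matvec_def unit_vec_def)
  qed
  then show thesis
    by (intro that[of "\<lambda>j k. V k j"]) blast
qed

lemma invertible_on_if_inj_on_matvec:
  fixes M :: "nat \<Rightarrow> nat \<Rightarrow> 'a::{comm_ring_1,finite}"
  assumes fin: "finite I" and inj: "inj_on (matvec I M) (supported_on I)"
  shows "invertible_on I M"
proof -
  obtain B where right: "\<forall>i\<in>I. \<forall>k\<in>I. (\<Sum>j\<in>I. M i j * B j k) = (if i = k then 1 else 0)"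
    using matvec_right_inverse_if_surj matvec_image_supported_on_eq[OF fin inj subset_refl] by blast
  have "(\<Sum>j\<in>I. B i j * M j k) = (if i = k then 1 else 0)" if "i \<in> I" "k \<in> I" for i k
  proof -
    let ?u = "matvec I M (unit_vec k)"
    have "matvec I M (matvec I B ?u) = ?u"
      using matvec_left_inverse[OF fin right matvec_supported_on] .
    then have "matvec I B ?u = unit_vec k"
      using inj matvec_supported_on unit_vec_supported_on[OF \<open>k \<in> I\<close>] by (blast dest: inj_onD)
    then have "matvec I B ?u i = unit_vec k i"
      by simp
    moreover have "matvec I B ?u i = (\<Sum>j\<in>I. B i j * ?u j)"
      using that by (simp add: matvec_def[of I B])
    moreover have "\<dots> = (\<Sum>j\<in>I. B i j * M j k)"
      using fin that by (intro sum.cong) (simp_all add: matvec_unit_vec)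
    ultimately show ?thesis
      by (simp add: unit_vec_def)
  qed
  with right show ?thesis
    unfolding invertible_on_def by blast
qed

lemma invertible_on_diagonal_block:
  fixes M :: "nat \<Rightarrow> nat \<Rightarrow> 'a::{comm_ring_1,finite}"
  assumes fin: "finite I" and inj: "inj_on (matvec I M) (supported_on I)"
    and "J \<subseteq> I" "U \<subseteq> I" "J \<inter> U = {}"
    and U_invariant: "\<forall>i\<in>I. \<forall>j\<in>U. i \<notin> U \<longrightarrow> M i j = 0"
    and J_zeros: "\<forall>i\<in>I. \<forall>j\<in>J. i \<notin> J \<union> U \<longrightarrow> M i j = 0"
  shows "invertible_on J M"
proof -
  have kernel: "d = (\<lambda>_. 0)" if d: "d \<in> supported_on J" and "matvec J M d = (\<lambda>_. 0)" for d
  proof -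
    have "matvec I M d \<in> supported_on U"
      unfolding supported_on_def
    proof (intro CollectI allI impI)
      fix i assume "i \<notin> U"
      show "matvec I M d i = 0"
      proof (cases "i \<in> I")
        case True
        have "(\<Sum>j\<in>I. M i j * d j) = (\<Sum>j\<in>J. M i j * d j)"
          using d fin \<open>J \<subseteq> I\<close> by (intro sum.mono_neutral_right) (auto simp: supported_on_def)
        also have "\<dots> = 0"
          using fun_cong[OF \<open>matvec J M d = (\<lambda>_. 0)\<close>, of i] J_zeros True \<open>i \<notin> U\<close>
          by (cases "i \<in> J") (auto simp: matvec_def)
        finally show ?thesis
          using True by (simp add: matvec_def)
      qed (simp add: matvec_def)
    qed
    then obtain u where u: "u \<in> supported_on U" "matvec I M u = matvec I M d"
      using matvec_image_supported_on_eq[OF fin inj \<open>U \<subseteq> I\<close> U_invariant]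
      by (metis imageE)
    moreover have "u \<in> supported_on I" "d \<in> supported_on I"
      using u(1) d supported_on_mono[OF \<open>U \<subseteq> I\<close>] supported_on_mono[OF \<open>J \<subseteq> I\<close>] by blast+
    ultimately have "u = d"
      using inj by (simp add: inj_on_eq_iff)
    then show ?thesis
      using u(1) d \<open>J \<inter> U = {}\<close> by (auto simp: supported_on_def)
  qed
  show ?thesis
  proof (rule invertible_on_if_inj_on_matvec[OF finite_subset[OF \<open>J \<subseteq> I\<close> fin]], rule inj_onI)
    fix v w assume "v \<in> supported_on J" "w \<in> supported_on J" "matvec J M v = matvec J M w"
    then have "(\<lambda>i. v i - w i) = (\<lambda>_. 0)"
      using kernel[of "\<lambda>i. v i - w i"] by (simp add: supported_on_def matvec_diff)
    then show "v = w"
      by (simp add: fun_eq_iff)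
  qed
qed

lemma subfield_sum:
  assumes "subfield K" "\<forall>j\<in>S. f j \<in> K"
  shows "sum f S \<in> K"
  using assms(2)
proof (induction S rule: infinite_finite_induct)
qed (use assms(1) in \<open>auto simp: subfield_def\<close>)

lemma subfield_add_iff:
  assumes "subfield K" "y \<in> K"
  shows "x + y \<in> K \<longleftrightarrow> x \<in> K"
proof
  assume "x + y \<in> K"
  then have "(x + y) + - y \<in> K"
    using assms unfolding subfield_def by blast
  then show "x \<in> K"
    by simp
qed (use assms in \<open>simp add: subfield_def\<close>)

lemma subfield_mult_iff:
  assumes "subfield K" "a \<in> K" "a \<noteq> 0"
  shows "a * x \<in> K \<longleftrightarrow> x \<in> K"
proof
  assume "a * x \<in> K"
  then have "inverse a * (a * x) \<in> K"
    using assms unfolding subfield_def by blast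
  then show "x \<in> K"
    using \<open>a \<noteq> 0\<close> by (simp add: mult.assoc[symmetric])
qed (use assms in \<open>simp add: subfield_def\<close>)

lemma chain_subset:
  assumes chain: "\<forall>i. 1 \<le> i \<and> i < n \<longrightarrow> K i \<subseteq> K (Suc i)"
    and "1 \<le> r" "r \<le> s" "s \<le> n"
  shows "K r \<subseteq> K s"
  using \<open>r \<le> s\<close> \<open>s \<le> n\<close>
proof (induction s rule: dec_induct)
  case (step m)
  then have "K r \<subseteq> K m" "K m \<subseteq> K (Suc m)"
    using chain \<open>1 \<le> r\<close> by simp_all
  then show ?case
    by (rule order.trans)
qed simp

lemma chain_psubset:
  assumes chain: "\<forall>i. 1 \<le> i \<and> i < n \<longrightarrow> K i \<subseteq> K (Suc i)"
    and "1 \<le> r" "r \<le> p" "K p \<subset> K (Suc p)" "Suc p \<le> s" "s \<le> n"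
  shows "K r \<subset> K s"
  using chain_subset[OF chain, of r p] chain_subset[OF chain, of "Suc p" s] assms(2-) by auto

definition coeffs_compatible ::
    "nat \<Rightarrow> (nat \<Rightarrow> 'a::zero set) \<Rightarrow> (nat \<Rightarrow> nat \<Rightarrow> 'a) \<Rightarrow> (nat \<Rightarrow> 'a) \<Rightarrow> bool" where
  "coeffs_compatible n K A b \<longleftrightarrow> (\<forall>i\<in>{1..n}. \<forall>j\<in>{1..n}. A i j \<in> K i \<and> b j \<in> K j \<and>
        (K i \<subset> K j \<longrightarrow> A i j = 0))"

definition maximal_constant_run :: "nat \<Rightarrow> (nat \<Rightarrow> 'a set) \<Rightarrow> nat \<Rightarrow> nat \<Rightarrow> bool" where
  "maximal_constant_run n K i j \<longleftrightarrow> 1 \<le> i \<and> i \<le> j \<and> j \<le> n \<and> (\<forall>k\<in>{i..j}. K k = K i) \<and>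
        (i = 1 \<or> K (i - 1) \<subset> K i) \<and> (j = n \<or> K j \<subset> K (Suc j))"

lemma coeffs_compatible_subset_if_nonzero:
  assumes chain: "\<forall>i. 1 \<le> i \<and> i < n \<longrightarrow> K i \<subseteq> K (Suc i)"
    and "coeffs_compatible n K A b" "i \<in> {1..n}" "j \<in> {1..n}" "A i j \<noteq> 0"
  shows "K j \<subseteq> K i"
proof (cases "i \<le> j")
  case True
  then have "K i \<subseteq> K j"
    using chain_subset[OF chain] assms(3,4) by simp
  moreover have "\<not> K i \<subset> K j"
    using assms(2-) unfolding coeffs_compatible_def by blast
  ultimately show ?thesis
    by blast
qed (use chain_subset[OF chain] assms(3,4) in simp)

lemma affmap_apply: "i \<in> {1..n} \<Longrightarrow> affmap n A b v i = (\<Sum>j=1..n. A i j * v j) + b i"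
  by (simp add: affmap_def)

lemma affmap_scaled_unit_vec:
  assumes "i \<in> {1..n}" "j \<in> {1..n}"
  shows "affmap n A b (\<lambda>l. c * unit_vec j l) i = A i j * c + b i"
  using assms by (simp add: affmap_apply unit_vec_def if_distrib cong: if_cong)

lemma inj_on_affmap:
  assumes "invertible_on {1..n} A"
  shows "inj_on (affmap n A b) (vecs n)"
proof (rule inj_onI)
  fix v w assume "v \<in> vecs n" "w \<in> vecs n" and eq: "affmap n A b v = affmap n A b w"
  have "matvec {1..n} A v i = matvec {1..n} A w i" for i
  proof (cases "i \<in> {1..n}")
    case True
    then show ?thesis
      using fun_cong[OF eq, of i] by (simp add: affmap_apply matvec_def)
  qed (auto simp: matvec_def)
  then have "matvec {1..n} A v = matvec {1..n} A w"
    by (rule ext)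
  with \<open>v \<in> vecs n\<close> \<open>w \<in> vecs n\<close> show "v = w"
    using inj_on_matvec_if_invertible_on[OF _ assms]
    by (simp add: vecs_eq_supported_on inj_on_eq_iff)
qed

lemma coeffs_compatible_if_affmap_maps_prodset:
  assumes subf: "\<forall>i\<in>{1..n}. subfield (K i)"
    and into: "affmap n A b ` prodset n K \<subseteq> prodset n K"
  shows "coeffs_compatible n K A b"
proof -
  have subf_i: "subfield (K i)" if "i \<in> {1..n}" for i
    using subf that by blast
  have image: "A i j * c + b i \<in> K i" if "i \<in> {1..n}" "j \<in> {1..n}" "c \<in> K j" for i j c
  proof -
    have "(\<lambda>l. c * unit_vec j l) \<in> prodset n K"
      using that subf_i by (auto simp: prodset_def vecs_def unit_vec_def subfield_def)
    then have "affmap n A b (\<lambda>l. c * unit_vec j l) \<in> prodset n K"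
      using into by blast
    then have "affmap n A b (\<lambda>l. c * unit_vec j l) i \<in> K i"
      using that(1) unfolding prodset_def by blast
    then show ?thesis
      by (simp add: affmap_scaled_unit_vec[OF that(1,2)])
  qed
  have b: "b i \<in> K i" if "i \<in> {1..n}" for i
    using image[OF that that, of 0] subf_i[OF that] by (simp add: subfield_def)
  have Ac: "A i j * c \<in> K i" if "i \<in> {1..n}" "j \<in> {1..n}" "c \<in> K j" for i j c
    using image[OF that] subfield_add_iff[OF subf_i b, of i "A i j * c"] that(1) by simp
  show ?thesis
    unfolding coeffs_compatible_def
  proof (intro ballI conjI impI)
    fix i j assume i: "i \<in> {1..n}" and j: "j \<in> {1..n}"
    show "b j \<in> K j"
      using b j .
    show A: "A i j \<in> K i"
      using Ac[OF i j, of 1] subf_i[OF j] by (simp add: subfield_def)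
    assume "K i \<subset> K j"
    show "A i j = 0"
    proof (rule ccontr)
      assume "A i j \<noteq> 0"
      then have "K j \<subseteq> K i"
        using Ac[OF i j] subfield_mult_iff[OF subf_i[OF i] A] by blast
      with \<open>K i \<subset> K j\<close> show False
        by blast
    qed
  qed
qed

lemma affmap_maps_prodset_if_coeffs_compatible:
  assumes subf: "\<forall>i\<in>{1..n}. subfield (K i)"
    and chain: "\<forall>i. 1 \<le> i \<and> i < n \<longrightarrow> K i \<subseteq> K (Suc i)"
    and compat: "coeffs_compatible n K A b"
  shows "affmap n A b ` prodset n K \<subseteq> prodset n K"
proof (rule image_subsetI)
  fix v assume "v \<in> prodset n K"
  then have v: "\<forall>i\<in>{1..n}. v i \<in> K i"
    by (simp add: prodset_def)
  show "affmap n A b v \<in> prodset n K"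
    unfolding prodset_def
  proof (intro CollectI conjI ballI)
    show "affmap n A b v \<in> vecs n"
      by (simp add: affmap_def vecs_def)
    fix i assume i: "i \<in> {1..n}"
    have "A i j * v j \<in> K i" if j: "j \<in> {1..n}" for j
    proof (cases "A i j = 0")
      case False
      then have "v j \<in> K i"
        using coeffs_compatible_subset_if_nonzero[OF chain compat i j] v j by blast
      moreover have "A i j \<in> K i"
        using compat i j unfolding coeffs_compatible_def by blast
      ultimately show ?thesis
        using subf i by (simp add: subfield_def)
    qed (use subf i in \<open>simp add: subfield_def\<close>)
    then have "(\<Sum>j=1..n. A i j * v j) \<in> K i"
      using subf i by (intro subfield_sum) auto
    moreover have "b i \<in> K i"
      using compat i unfolding coeffs_compatible_def by blast
    ultimately show "affmap n A b v i \<in> K i"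
      using subf i by (simp add: affmap_apply subfield_def)
  qed
qed

lemma affmap_image_prodset_eq:
  fixes A :: "nat \<Rightarrow> nat \<Rightarrow> 'a::{field,finite}"
  assumes "\<forall>i\<in>{1..n}. subfield (K i)"
    and "\<forall>i. 1 \<le> i \<and> i < n \<longrightarrow> K i \<subseteq> K (Suc i)"
    and "invertible_on {1..n} A" "coeffs_compatible n K A b"
  shows "affmap n A b ` prodset n K = prodset n K"
proof (rule endo_inj_surj)
  have "prodset n K \<subseteq> vecs n"
    by (simp add: prodset_def)
  then show "finite (prodset n K)" "inj_on (affmap n A b) (prodset n K)"
    using finite_supported_on[of "{1..n}"] inj_on_affmap[OF assms(3)]
    by (auto simp: vecs_eq_supported_on intro: finite_subset inj_on_subset)
  show "affmap n A b ` prodset n K \<subseteq> prodset n K"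
    using affmap_maps_prodset_if_coeffs_compatible assms by blast
qed

lemma invertible_on_maximal_constant_run:
  fixes A :: "nat \<Rightarrow> nat \<Rightarrow> 'a::{comm_ring_1,finite}"
  assumes chain: "\<forall>i. 1 \<le> i \<and> i < n \<longrightarrow> K i \<subseteq> K (Suc i)"
    and GL: "invertible_on {1..n} A" and compat: "coeffs_compatible n K A b"
    and run: "maximal_constant_run n K i j"
  shows "invertible_on {i..j} A"
proof -
  have bounds: "1 \<le> i" "i \<le> j" "j \<le> n"
    and const: "\<forall>k\<in>{i..j}. K k = K i"
    and left: "i = 1 \<or> K (i - 1) \<subset> K i" and right: "j = n \<or> K j \<subset> K (Suc j)"
    using run unfolding maximal_constant_run_def by blast+
  have zero: "A r s = 0" if "r \<in> {1..n}" "s \<in> {1..n}" "K r \<subset> K s" for r s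
    using compat that unfolding coeffs_compatible_def by blast
  show ?thesis
  proof (rule invertible_on_diagonal_block[where I = "{1..n}" and U = "{Suc j..n}"])
    show "inj_on (matvec {1..n} A) (supported_on {1..n})"
      by (rule inj_on_matvec_if_invertible_on[OF _ GL]) simp
    show "\<forall>r\<in>{1..n}. \<forall>s\<in>{Suc j..n}. r \<notin> {Suc j..n} \<longrightarrow> A r s = 0"
    proof (intro ballI impI)
      fix r s assume r: "r \<in> {1..n}" "r \<notin> {Suc j..n}" and s: "s \<in> {Suc j..n}"
      then have "K j \<subset> K (Suc j)"
        using right by auto
      then have "K r \<subset> K s"
        using r s by (intro chain_psubset[OF chain, of r j s]) auto
      then show "A r s = 0"
        using r s by (intro zero) auto
    qed
    show "\<forall>r\<in>{1..n}. \<forall>s\<in>{i..j}. r \<notin> {i..j} \<union> {Suc j..n} \<longrightarrow> A r s = 0"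
    proof (intro ballI impI)
      fix r s assume r: "r \<in> {1..n}" "r \<notin> {i..j} \<union> {Suc j..n}" and s: "s \<in> {i..j}"
      then have "r < i"
        by auto
      then have "K (i - 1) \<subset> K (Suc (i - 1))"
        using left r by auto
      then have "K r \<subset> K i"
        using r \<open>r < i\<close> bounds by (intro chain_psubset[OF chain, of r "i - 1" i]) auto
      moreover have "K s = K i"
        using const s by blast
      ultimately show "A r s = 0"
        using r s bounds by (intro zero) auto
    qed
  qed (use bounds in auto)
qed

theorem mainTheorem7:
  fixes n :: nat
    and K :: "nat \<Rightarrow> ('a::{field,finite}) set"
    and A :: "nat \<Rightarrow> nat \<Rightarrow> 'a"
    and b :: "nat \<Rightarrow> 'a"
  assumes subf: "\<forall>i\<in>{1..n}. subfield (K i)"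
    and chain: "\<forall>i. 1 \<le> i \<and> i < n \<longrightarrow> K i \<subseteq> K (Suc i)"
    and GL: "invertible_on {1..n} A"
    and bvec: "b \<in> vecs n"
  shows "affmap n A b ` prodset n K = prodset n K \<longleftrightarrow>
    ((\<forall>i\<in>{1..n}. \<forall>j\<in>{1..n}. A i j \<in> K i \<and> b j \<in> K j \<and>
        (K i \<subset> K j \<longrightarrow> A i j = 0)) \<and>
     (\<forall>i j. 1 \<le> i \<and> i \<le> j \<and> j \<le> n \<and> (\<forall>k\<in>{i..j}. K k = K i) \<and>
        (i = 1 \<or> K (i - 1) \<subset> K i) \<and> (j = n \<or> K j \<subset> K (Suc j))
        \<longrightarrow> invertible_on {i..j} A))"
proof -
  have "affmap n A b ` prodset n K = prodset n K \<longleftrightarrow> coeffs_compatible n K A b"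
    using coeffs_compatible_if_affmap_maps_prodset[OF subf] affmap_image_prodset_eq[OF subf chain GL]
    by blast
  moreover have "invertible_on {i..j} A"
    if "coeffs_compatible n K A b" "maximal_constant_run n K i j" for i j
    using invertible_on_maximal_constant_run[OF chain GL that] .
  ultimately show ?thesis
    unfolding coeffs_compatible_def[symmetric] maximal_constant_run_def[symmetric] by blast
qed

end
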